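(* Let $G$ and $H$ be connected graphs. Then $$dim_s(G\square H)\ge \mu(H_{SR})\,dim_s(G\square K_2)\ge 2\,\mu(G_{SR})\,\mu(H_{SR}).$$
   Context: Graphs are finite, simple, undirected; for connected $G$, $d_G$ is the shortest-path distance and $I_G[u,v]$ is the set of vertices lying on some shortest $u$–$v$ path. A vertex $w$ strongly resolves vertices $u,v$ if $v\in I_G[u,w]$ or $u\in I_G[v,w]$. A strong resolving set of $G$ is a set $S\subseteq V(G)$ such that every pair of vertices is strongly resolved by some vertex of $S$; $dim_s(G)$ is the minimum cardinality of such a set. A vertex $u$ is maximally distant from $v$ if $d_G(v,w)\le d_G(u,v)$ for every neighbor $w$ of $u$; distinct $u,v$ are mutually maximally distant if each is maximally distant from the other. The boundary $\partial(G)$ is the set of vertices mutually maximally distant with some vertex. The strong resolving graph $G_{SR}$ has vertex set $\partial(G)$, two vertices adjacent iff they are mutually maximally distant in $G$. $\mu(F)$ is the matching number (maximum size of a matching) of $F$. $K_2$ is the complete graph on two vertices. $G\square H$ denotes the Cartesian product: vertex set $V(G)\times V(H)$, $(a,b)\sim(c,d)$ iff ($a=c$ and $bd\in E(H)$) or ($b=d$ and $ac\in E(G)$). *)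

theory Defs
  imports Main
begin

type_synonym 'a graph = "'a set \<times> ('a \<times> 'a) set"

definition verts :: "'a graph \<Rightarrow> 'a set" where "verts G = fst G"
definition adj :: "'a graph \<Rightarrow> ('a \<times> 'a) set" where "adj G = snd G"

definition simple_graph :: "'a graph \<Rightarrow> bool" where
  "simple_graph G \<longleftrightarrow> finite (verts G) \<and> adj G \<subseteq> verts G \<times> verts G
     \<and> sym (adj G) \<and> irrefl (adj G)"

definition connected_graph :: "'a graph \<Rightarrow> bool" where
  "connected_graph G \<longleftrightarrow> simple_graph G \<and> verts G \<noteq> {}
     \<and> (\<forall>u\<in>verts G. \<forall>v\<in>verts G. (u, v) \<in> (adj G)\<^sup>*)"

definition gdist :: "'a graph \<Rightarrow> 'a \<Rightarrow> 'a \<Rightarrow> nat" where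
  "gdist G u v = (LEAST n. (u, v) \<in> adj G ^^ n)"

definition interval :: "'a graph \<Rightarrow> 'a \<Rightarrow> 'a \<Rightarrow> 'a set" where
  "interval G u v = {w \<in> verts G. gdist G u w + gdist G w v = gdist G u v}"

definition strongly_resolves :: "'a graph \<Rightarrow> 'a \<Rightarrow> 'a \<Rightarrow> 'a \<Rightarrow> bool" where
  "strongly_resolves G w u v \<longleftrightarrow> v \<in> interval G u w \<or> u \<in> interval G v w"

definition strong_resolving_set :: "'a graph \<Rightarrow> 'a set \<Rightarrow> bool" where
  "strong_resolving_set G S \<longleftrightarrow> S \<subseteq> verts G \<and>
     (\<forall>u\<in>verts G. \<forall>v\<in>verts G. \<exists>w\<in>S. strongly_resolves G w u v)"

definition sdim :: "'a graph \<Rightarrow> nat" where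
  "sdim G = (LEAST k. \<exists>S. strong_resolving_set G S \<and> card S = k)"

definition maximally_distant :: "'a graph \<Rightarrow> 'a \<Rightarrow> 'a \<Rightarrow> bool" where
  "maximally_distant G u v \<longleftrightarrow>
     (\<forall>w. (u, w) \<in> adj G \<longrightarrow> gdist G v w \<le> gdist G u v)"

definition mutually_maximally_distant :: "'a graph \<Rightarrow> 'a \<Rightarrow> 'a \<Rightarrow> bool" where
  "mutually_maximally_distant G u v \<longleftrightarrow> u \<in> verts G \<and> v \<in> verts G \<and> u \<noteq> v
     \<and> maximally_distant G u v \<and> maximally_distant G v u"

definition boundary :: "'a graph \<Rightarrow> 'a set" where
  "boundary G = {u \<in> verts G. \<exists>v. mutually_maximally_distant G u v}"

definition strong_resolving_graph :: "'a graph \<Rightarrow> 'a graph" where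
  "strong_resolving_graph G =
     (boundary G, {(u, v). mutually_maximally_distant G u v})"

definition matching :: "'a graph \<Rightarrow> 'a set set \<Rightarrow> bool" where
  "matching F M \<longleftrightarrow> (\<forall>e\<in>M. \<exists>u v. e = {u, v} \<and> (u, v) \<in> adj F)
     \<and> (\<forall>e\<in>M. \<forall>e'\<in>M. e \<noteq> e' \<longrightarrow> e \<inter> e' = {})"

definition matching_number :: "'a graph \<Rightarrow> nat" where
  "matching_number F = Max {card M | M. matching F M}"

definition cart_prod :: "'a graph \<Rightarrow> 'b graph \<Rightarrow> ('a \<times> 'b) graph" where
  "cart_prod G H = (verts G \<times> verts H,
     {((a, b), (c, d)). a \<in> verts G \<and> b \<in> verts H \<and> c \<in> verts G \<and> d \<in> verts H \<and>
        ((a = c \<and> (b, d) \<in> adj H) \<or> (b = d \<and> (a, c) \<in> adj G))})"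

definition K2 :: "bool graph" where
  "K2 = (UNIV, {(x, y). x \<noteq> y})"

end

theory Submission
  imports Defs
begin

text \<open>Distances in \<open>G \<box> H\<close> are sums of the distances in the factors, so intervals factor,
and a strong resolving set must contain an endpoint of every mutually maximally distant pair.
If \<open>hh'\<close> is an edge of \<open>H\<^sub>S\<^sub>R\<close>, the layers \<open>G \<times> {h, h'}\<close> behave like \<open>G \<box> K\<^sub>2\<close>: the part of a
strong resolving set of \<open>G \<box> H\<close> inside them projects injectively onto a strong resolving set of
\<open>G \<box> K\<^sub>2\<close>. Summing over the disjoint layers of a maximum matching gives the first inequality.
If \<open>gg'\<close> is an edge of \<open>G\<^sub>S\<^sub>R\<close>, then \<open>(g, b)\<close> and \<open>(g', \<not> b)\<close> are mutually maximally distant in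
\<open>G \<box> K\<^sub>2\<close> for both \<open>b\<close>, so a strong resolving set meets \<open>{g, g'} \<times> K\<^sub>2\<close> twice; summing again
gives the second.\<close>

lemma relpow_sym: "sym R \<Longrightarrow> (x, y) \<in> R ^^ n \<Longrightarrow> (y, x) \<in> R ^^ n"
proof (induction n arbitrary: x y)
  case 0
  then show ?case by auto
next
  case (Suc n)
  from Suc.prems(2) obtain z where "(x, z) \<in> R ^^ n" and "(z, y) \<in> R"
    by (rule relpow_Suc_E)
  with Suc show ?case by (meson relpow_Suc_I2 symD)
qed

lemma connected_graph_adjD:
  "connected_graph G \<Longrightarrow> (u, v) \<in> adj G \<Longrightarrow> u \<in> verts G \<and> v \<in> verts G"
  unfolding connected_graph_def simple_graph_def by auto

lemma connected_graph_finite: "connected_graph G \<Longrightarrow> finite (verts G)"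
  unfolding connected_graph_def simple_graph_def by simp

subsection \<open>Shortest-path distance\<close>

lemma gdist_le_walk: "(u, v) \<in> adj G ^^ n \<Longrightarrow> gdist G u v \<le> n"
  unfolding gdist_def by (rule Least_le)

lemma walk_gdist:
  assumes "connected_graph G" "u \<in> verts G" "v \<in> verts G"
  shows "(u, v) \<in> adj G ^^ gdist G u v"
proof -
  have "\<exists>n. (u, v) \<in> adj G ^^ n"
    using assms rtrancl_power unfolding connected_graph_def by blast
  then show ?thesis unfolding gdist_def by (rule LeastI_ex)
qed

lemma gdist_self [simp]: "gdist G u u = 0"
  using gdist_le_walk[OF relpow_0_I] by simp

lemma gdist_commute:
  assumes G: "connected_graph G" and "u \<in> verts G" "v \<in> verts G"
  shows "gdist G u v = gdist G v u"
proof -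
  have sym: "sym (adj G)" using G unfolding connected_graph_def simple_graph_def by simp
  have "gdist G v u \<le> gdist G u v"
    by (rule gdist_le_walk[OF relpow_sym[OF sym walk_gdist[OF assms]]])
  moreover have "gdist G u v \<le> gdist G v u"
    by (rule gdist_le_walk[OF relpow_sym[OF sym walk_gdist[OF G assms(3,2)]]])
  ultimately show ?thesis by simp
qed

lemma gdist_triangle:
  assumes "connected_graph G" "u \<in> verts G" "v \<in> verts G" "w \<in> verts G"
  shows "gdist G u w \<le> gdist G u v + gdist G v w"
  by (rule gdist_le_walk[OF relpow_trans[OF walk_gdist[OF assms(1-3)] walk_gdist[OF assms(1,3,4)]]])

lemma gdist_adj_le:
  assumes G: "connected_graph G" and "u \<in> verts G" and vw: "(v, w) \<in> adj G"
  shows "gdist G u w \<le> gdist G u v + 1"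
proof -
  have "(u, w) \<in> adj G ^^ Suc (gdist G u v)"
    using relpow_Suc_I[OF walk_gdist[OF G assms(2)] vw] connected_graph_adjD[OF G vw] by blast
  then show ?thesis using gdist_le_walk by fastforce
qed

text \<open>A geodesic from \<open>u\<close> through \<open>v\<close> cannot be extended beyond \<open>v\<close>: its next vertex
would be a neighbour of \<open>v\<close> farther from \<open>u\<close> than \<open>v\<close> is.\<close>

lemma maximally_distant_interval_eq:
  assumes G: "connected_graph G" and u: "u \<in> verts G" and v: "v \<in> verts G"
    and k: "k \<in> verts G" and md: "maximally_distant G v u" and vk: "v \<in> interval G u k"
  shows "k = v"
proof (rule ccontr)
  assume "k \<noteq> v"
  have walk: "(v, k) \<in> adj G ^^ gdist G v k" using walk_gdist[OF G v k] .
  with \<open>k \<noteq> v\<close> have "gdist G v k \<noteq> 0" by (cases "gdist G v k") auto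
  then obtain m where m: "gdist G v k = Suc m" using not0_implies_Suc by blast
  from walk[unfolded m] obtain n where vn: "(v, n) \<in> adj G" and nk: "(n, k) \<in> adj G ^^ m"
    by (rule relpow_Suc_E2)
  have n: "n \<in> verts G" using connected_graph_adjD[OF G vn] by simp
  have "gdist G u n \<le> gdist G u v"
    using md vn gdist_commute[OF G u v] unfolding maximally_distant_def by simp
  moreover have "gdist G u k \<le> gdist G u n + gdist G n k" using gdist_triangle[OF G u n k] .
  moreover have "gdist G u v + gdist G v k = gdist G u k" using vk unfolding interval_def by simp
  ultimately show False using gdist_le_walk[OF nk] m by linarith
qed

lemma mutually_maximally_distant_sym:
  "mutually_maximally_distant G u v \<Longrightarrow> mutually_maximally_distant G v u"
  unfolding mutually_maximally_distant_def by auto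

lemma mutually_maximally_distant_interval_eq:
  assumes G: "connected_graph G" and uv: "mutually_maximally_distant G u v"
    and k: "k \<in> verts G" and vk: "v \<in> interval G u k"
  shows "k = v"
proof -
  from uv have "u \<in> verts G" "v \<in> verts G" "maximally_distant G v u"
    unfolding mutually_maximally_distant_def by simp_all
  then show ?thesis by (rule maximally_distant_interval_eq[OF G _ _ k _ vk])
qed

subsection \<open>Cartesian products\<close>

lemma verts_cart_prod [simp]: "verts (cart_prod G H) = verts G \<times> verts H"
  unfolding cart_prod_def verts_def by simp

lemma adj_cart_prod:
  "((a, b), (c, d)) \<in> adj (cart_prod G H) \<longleftrightarrow>
     a \<in> verts G \<and> b \<in> verts H \<and> c \<in> verts G \<and> d \<in> verts H \<and>
     ((a = c \<and> (b, d) \<in> adj H) \<or> (b = d \<and> (a, c) \<in> adj G))"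
  unfolding cart_prod_def adj_def verts_def by simp

lemma cart_prod_walk_fst:
  assumes G: "connected_graph G" and b: "b \<in> verts H"
  shows "(x, y) \<in> adj G ^^ n \<Longrightarrow> ((x, b), (y, b)) \<in> adj (cart_prod G H) ^^ n"
proof (induction n arbitrary: y)
  case (Suc n)
  from Suc.prems obtain z where "(x, z) \<in> adj G ^^ n" and e: "(z, y) \<in> adj G" by (rule relpow_Suc_E)
  moreover have "((z, b), (y, b)) \<in> adj (cart_prod G H)"
    using connected_graph_adjD[OF G e] e b by (simp add: adj_cart_prod)
  ultimately show ?case using Suc.IH by (blast intro: relpow_Suc_I)
qed simp

lemma cart_prod_walk_snd:
  assumes H: "connected_graph H" and a: "a \<in> verts G"
  shows "(x, y) \<in> adj H ^^ n \<Longrightarrow> ((a, x), (a, y)) \<in> adj (cart_prod G H) ^^ n"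
proof (induction n arbitrary: y)
  case (Suc n)
  from Suc.prems obtain z where "(x, z) \<in> adj H ^^ n" and e: "(z, y) \<in> adj H" by (rule relpow_Suc_E)
  moreover have "((a, z), (a, y)) \<in> adj (cart_prod G H)"
    using connected_graph_adjD[OF H e] e a by (simp add: adj_cart_prod)
  ultimately show ?case using Suc.IH by (blast intro: relpow_Suc_I)
qed simp

lemma cart_prod_walk_length_ge:
  assumes G: "connected_graph G" and H: "connected_graph H"
    and a: "a \<in> verts G" and b: "b \<in> verts H"
  shows "((a, b), (c, d)) \<in> adj (cart_prod G H) ^^ n \<Longrightarrow> gdist G a c + gdist H b d \<le> n"
proof (induction n arbitrary: c d)
  case (Suc n)
  from Suc.prems obtain z where walk': "((a, b), z) \<in> adj (cart_prod G H) ^^ n"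
    and e': "(z, (c, d)) \<in> adj (cart_prod G H)"
    by (rule relpow_Suc_E)
  obtain c' d' where "z = (c', d')" by fastforce
  with walk' e' have walk: "((a, b), (c', d')) \<in> adj (cart_prod G H) ^^ n"
    and e: "((c', d'), (c, d)) \<in> adj (cart_prod G H)" by simp_all
  from e have "(c' = c \<and> (d', d) \<in> adj H) \<or> (d' = d \<and> (c', c) \<in> adj G)"
    by (simp add: adj_cart_prod)
  then show ?case
    using Suc.IH[OF walk] gdist_adj_le[OF G a, of c' c] gdist_adj_le[OF H b, of d' d] by auto
qed simp

lemma gdist_cart_prod:
  assumes G: "connected_graph G" and H: "connected_graph H"
    and a: "a \<in> verts G" and b: "b \<in> verts H" and c: "c \<in> verts G" and d: "d \<in> verts H"
  shows "gdist (cart_prod G H) (a, b) (c, d) = gdist G a c + gdist H b d"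
proof -
  have walk: "((a, b), (c, d)) \<in> adj (cart_prod G H) ^^ (gdist G a c + gdist H b d)"
    using relpow_trans[OF cart_prod_walk_fst[OF G b walk_gdist[OF G a c]]
        cart_prod_walk_snd[OF H c walk_gdist[OF H b d]]] .
  then have "((a, b), (c, d)) \<in> adj (cart_prod G H) ^^ gdist (cart_prod G H) (a, b) (c, d)"
    unfolding gdist_def by (rule LeastI)
  then show ?thesis
    using gdist_le_walk[OF walk] cart_prod_walk_length_ge[OF G H a b] by (simp add: antisym)
qed

lemma interval_cart_prod:
  assumes G: "connected_graph G" and H: "connected_graph H"
    and a: "a \<in> verts G" and b: "b \<in> verts H" and c: "c \<in> verts G" and d: "d \<in> verts H"
  shows "(x, y) \<in> interval (cart_prod G H) (a, b) (c, d) \<longleftrightarrow>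
           x \<in> interval G a c \<and> y \<in> interval H b d"
proof -
  have "x \<in> verts G \<Longrightarrow> gdist G a c \<le> gdist G a x + gdist G x c"
    by (rule gdist_triangle[OF G a _ c])
  moreover have "y \<in> verts H \<Longrightarrow> gdist H b d \<le> gdist H b y + gdist H y d"
    by (rule gdist_triangle[OF H b _ d])
  ultimately show ?thesis
    unfolding interval_def using a b c d by (auto simp: gdist_cart_prod[OF G H])
qed

lemma connected_graph_cart_prod:
  assumes G: "connected_graph G" and H: "connected_graph H"
  shows "connected_graph (cart_prod G H)"
proof -
  have "simple_graph G" "simple_graph H"
    using G H unfolding connected_graph_def by auto
  then have "simple_graph (cart_prod G H)"
    unfolding simple_graph_def sym_def irrefl_def by (auto simp: adj_cart_prod)
  moreover have "((a, b), (c, d)) \<in> (adj (cart_prod G H))\<^sup>*"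
    if "a \<in> verts G" "b \<in> verts H" "c \<in> verts G" "d \<in> verts H" for a b c d
    using relpow_trans[OF cart_prod_walk_fst[OF G that(2) walk_gdist[OF G that(1,3)]]
        cart_prod_walk_snd[OF H that(3) walk_gdist[OF H that(2,4)]]]
    by (meson relpow_imp_rtrancl)
  ultimately show ?thesis
    using G H unfolding connected_graph_def by auto
qed

lemma maximally_distant_cart_prod:
  assumes G: "connected_graph G" and H: "connected_graph H"
    and u: "u \<in> verts G" and v: "v \<in> verts G" and x: "x \<in> verts H" and y: "y \<in> verts H"
    and mdG: "maximally_distant G u v" and mdH: "maximally_distant H x y"
  shows "maximally_distant (cart_prod G H) (u, x) (v, y)"
  unfolding maximally_distant_def
proof (intro allI impI)
  fix w assume "((u, x), w) \<in> adj (cart_prod G H)"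
  then obtain a c where w: "w = (a, c)" and a: "a \<in> verts G" and c: "c \<in> verts H"
    and "(u = a \<and> (x, c) \<in> adj H) \<or> (x = c \<and> (u, a) \<in> adj G)"
    by (cases w) (auto simp: adj_cart_prod)
  then have "gdist G v a + gdist H y c \<le> gdist G u v + gdist H x y"
    using mdG mdH gdist_commute[OF G u v] gdist_commute[OF H x y]
    unfolding maximally_distant_def by auto
  then show "gdist (cart_prod G H) (v, y) w \<le> gdist (cart_prod G H) (u, x) (v, y)"
    by (simp add: w gdist_cart_prod[OF G H] a c u v x y)
qed

lemma mutually_maximally_distant_cart_prod:
  assumes "connected_graph G" "connected_graph H"
    and "mutually_maximally_distant G u v" "mutually_maximally_distant H x y"
  shows "mutually_maximally_distant (cart_prod G H) (u, x) (v, y)"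
  using assms maximally_distant_cart_prod[OF assms(1,2)]
  unfolding mutually_maximally_distant_def by simp

lemma verts_K2 [simp]: "verts K2 = UNIV"
  unfolding K2_def verts_def by simp

lemma adj_K2 [simp]: "(x, y) \<in> adj K2 \<longleftrightarrow> x \<noteq> y"
  unfolding K2_def adj_def by simp

lemma connected_graph_K2: "connected_graph K2"
proof -
  have "(u, v) \<in> (adj K2)\<^sup>*" for u v
    by (cases "u = v") (auto intro: r_into_rtrancl)
  then show ?thesis
    unfolding connected_graph_def simple_graph_def by (auto simp: sym_def irrefl_def)
qed

lemma gdist_K2: "gdist K2 x y = (if x = y then 0 else 1)"
proof (cases "x = y")
  case False
  then have "gdist K2 x y \<le> 1" by (intro gdist_le_walk) simp
  moreover have "gdist K2 x y \<noteq> 0"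
    using walk_gdist[OF connected_graph_K2, of x y] False by (metis UNIV_I verts_K2 relpow_0_E)
  ultimately show ?thesis using False by simp
qed simp

lemma interval_K2: "interval K2 a b = {a, b}"
  unfolding interval_def by (auto simp: gdist_K2)

lemma mutually_maximally_distant_K2: "mutually_maximally_distant K2 b (\<not> b)"
  unfolding mutually_maximally_distant_def maximally_distant_def by (simp add: gdist_K2)

subsection \<open>Strong resolving sets\<close>

lemma strong_resolving_set_verts: "strong_resolving_set G (verts G)"
  unfolding strong_resolving_set_def strongly_resolves_def
proof (intro conjI ballI subset_refl)
  fix u v assume "v \<in> verts G"
  moreover from this have "v \<in> interval G u v" by (simp add: interval_def)
  ultimately show "\<exists>w\<in>verts G. v \<in> interval G u w \<or> u \<in> interval G v w" by blast
qed

lemma sdim_le_card: "strong_resolving_set G S \<Longrightarrow> sdim G \<le> card S"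
  unfolding sdim_def by (rule Least_le) blast

lemma obtain_strong_resolving_set_sdim:
  obtains S where "strong_resolving_set G S" "card S = sdim G"
proof -
  have "\<exists>S. strong_resolving_set G S \<and> card S = sdim G"
    unfolding sdim_def by (rule LeastI_ex) (use strong_resolving_set_verts in blast)
  with that show ?thesis by blast
qed

lemma strong_resolving_set_finite:
  "finite (verts G) \<Longrightarrow> strong_resolving_set G S \<Longrightarrow> finite S"
  unfolding strong_resolving_set_def by (auto intro: finite_subset)

text \<open>Only \<open>u\<close> and \<open>v\<close> themselves can strongly resolve a mutually maximally distant pair.\<close>

lemma mutually_maximally_distant_strong_resolving_set:
  assumes G: "connected_graph G" and S: "strong_resolving_set G S"
    and uv: "mutually_maximally_distant G u v"
  shows "u \<in> S \<or> v \<in> S"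
proof -
  have "u \<in> verts G" "v \<in> verts G" using uv unfolding mutually_maximally_distant_def by auto
  then obtain w where w: "w \<in> S" "w \<in> verts G" and "v \<in> interval G u w \<or> u \<in> interval G v w"
    using S unfolding strong_resolving_set_def strongly_resolves_def by blast
  then have "w = v \<or> w = u"
    using mutually_maximally_distant_interval_eq[OF G uv w(2)]
      mutually_maximally_distant_interval_eq[OF G mutually_maximally_distant_sym[OF uv] w(2)]
    by blast
  with w show ?thesis by blast
qed

lemma strongly_resolves_cart_prod_mutually_maximally_distant:
  assumes G: "connected_graph G" and H: "connected_graph H"
    and S: "strong_resolving_set (cart_prod G H) S"
    and h: "mutually_maximally_distant H h h'"
    and g: "g \<in> verts G" and g': "g' \<in> verts G"
  obtains x where "(x, h') \<in> S" "g' \<in> interval G g x"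
        | x where "(x, h) \<in> S" "g \<in> interval G g' x"
proof -
  have hV: "h \<in> verts H" "h' \<in> verts H" using h unfolding mutually_maximally_distant_def by auto
  obtain x y where w: "(x, y) \<in> S" and x: "x \<in> verts G" and y: "y \<in> verts H"
    and "(g', h') \<in> interval (cart_prod G H) (g, h) (x, y) \<or>
         (g, h) \<in> interval (cart_prod G H) (g', h') (x, y)"
    using S g g' hV unfolding strong_resolving_set_def strongly_resolves_def by fastforce
  then consider "g' \<in> interval G g x" "h' \<in> interval H h y"
    | "g \<in> interval G g' x" "h \<in> interval H h' y"
    using interval_cart_prod[OF G H] g g' x y hV by blast
  then show ?thesis
  proof cases
    case 1
    with w show ?thesis
      using that(1) mutually_maximally_distant_interval_eq[OF H h y] by blast
  next
    case 2
    with w show ?thesis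
      using that(2) mutually_maximally_distant_interval_eq[OF H mutually_maximally_distant_sym[OF h] y]
      by blast
  qed
qed

text \<open>With \<open>h, h'\<close> encoding \<open>False, True\<close>, the pair \<open>(g, b), (g', b')\<close> of \<open>G \<box> K\<^sub>2\<close> is resolved by the
projection of a vertex resolving \<open>(g, code b), (g', code (\<not> b))\<close> in \<open>G \<box> H\<close>: its \<open>K\<^sub>2\<close>-coordinate
is opposite to that of one of the two vertices, and then the \<open>K\<^sub>2\<close>-interval is everything.\<close>

lemma sdim_cart_prod_K2_le:
  assumes G: "connected_graph G" and H: "connected_graph H"
    and S: "strong_resolving_set (cart_prod G H) S"
    and h: "mutually_maximally_distant H h h'"
  shows "sdim (cart_prod G K2) \<le> card (S \<inter> verts G \<times> {h, h'})"
proof -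
  define A where "A = S \<inter> verts G \<times> {h, h'}"
  define code :: "bool \<Rightarrow> 'b" where "code b = (if b then h' else h)" for b
  define proj where "proj = (\<lambda>(x :: 'a, y). (x, y = h'))"
  have hh': "h \<noteq> h'" using h unfolding mutually_maximally_distant_def by simp
  have proj_code: "proj (x, code b) = (x, b)" for x b
    using hh' unfolding proj_def code_def by simp
  have S_verts: "(x, y) \<in> S \<Longrightarrow> x \<in> verts G" for x y
    using S unfolding strong_resolving_set_def by auto
  have code_A: "(x, code c) \<in> S \<Longrightarrow> (x, c) \<in> proj ` A" for x c
    using S_verts proj_code[symmetric] unfolding A_def code_def by force
  have "strong_resolving_set (cart_prod G K2) (proj ` A)"
    unfolding strong_resolving_set_def
  proof (intro conjI ballI)
    show "proj ` A \<subseteq> verts (cart_prod G K2)"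
      using S_verts unfolding A_def proj_def by auto
  next
    fix u v assume "u \<in> verts (cart_prod G K2)" and "v \<in> verts (cart_prod G K2)"
    then obtain g b g' b' where uv: "u = (g, b)" "v = (g', b')"
      and g: "g \<in> verts G" and g': "g' \<in> verts G" by auto
    have "mutually_maximally_distant H (code b) (code (\<not> b))"
      using h unfolding code_def by (cases b) (simp_all add: mutually_maximally_distant_sym)
    then show "\<exists>w\<in>proj ` A. strongly_resolves (cart_prod G K2) w u v"
    proof (rule strongly_resolves_cart_prod_mutually_maximally_distant[OF G H S _ g g'])
      fix x assume x: "(x, code (\<not> b)) \<in> S" "g' \<in> interval G g x"
      then have "v \<in> interval (cart_prod G K2) u (x, \<not> b)"
        using interval_cart_prod[OF G connected_graph_K2 g _ S_verts] g' uv
        by (auto simp: interval_K2)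
      with code_A[OF x(1)] show ?thesis unfolding strongly_resolves_def by blast
    next
      fix x assume x: "(x, code b) \<in> S" "g \<in> interval G g' x"
      then have "u \<in> interval (cart_prod G K2) v (x, b)"
        using interval_cart_prod[OF G connected_graph_K2 g' _ S_verts] g uv
        by (auto simp: interval_K2)
      with code_A[OF x(1)] show ?thesis unfolding strongly_resolves_def by blast
    qed
  qed
  moreover have "inj_on proj A"
    using hh' unfolding inj_on_def A_def proj_def by auto
  ultimately show ?thesis
    unfolding A_def by (metis card_image sdim_le_card)
qed

lemma two_le_card_strong_resolving_set_K2:
  assumes G: "connected_graph G" and S: "strong_resolving_set (cart_prod G K2) S"
    and g: "mutually_maximally_distant G g g'"
  shows "2 \<le> card (S \<inter> {g, g'} \<times> UNIV)"
proof -
  have "(g, b) \<in> S \<or> (g', \<not> b) \<in> S" for b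
    using mutually_maximally_distant_strong_resolving_set[OF
        connected_graph_cart_prod[OF G connected_graph_K2] S
        mutually_maximally_distant_cart_prod[OF G connected_graph_K2 g mutually_maximally_distant_K2]] .
  then obtain p q where "p \<in> S \<inter> {(g, False), (g', True)}" "q \<in> S \<inter> {(g, True), (g', False)}"
    by blast
  moreover have "g \<noteq> g'" using g unfolding mutually_maximally_distant_def by simp
  moreover have "finite S"
    using S connected_graph_finite[OF connected_graph_cart_prod[OF G connected_graph_K2]]
    by (rule strong_resolving_set_finite[rotated])
  ultimately have "{p, q} \<subseteq> S \<inter> {g, g'} \<times> UNIV" "card {p, q} = 2"
    by auto
  with \<open>finite S\<close> show ?thesis using card_mono[of "S \<inter> {g, g'} \<times> UNIV" "{p, q}"] by simp
qed

subsection \<open>Matchings of the strong resolving graph\<close>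

lemma card_mult_le_card_disjoint_blocks:
  assumes I: "finite I" and S: "finite S"
    and disjoint: "\<And>i j. i \<in> I \<Longrightarrow> j \<in> I \<Longrightarrow> i \<noteq> j \<Longrightarrow> F i \<inter> F j = {}"
    and block: "\<And>i. i \<in> I \<Longrightarrow> k \<le> card (S \<inter> F i)"
  shows "card I * k \<le> card S"
proof -
  have "card I * k = (\<Sum>i\<in>I. k)" by simp
  also have "\<dots> \<le> (\<Sum>i\<in>I. card (S \<inter> F i))" using block by (rule sum_mono)
  also have "\<dots> = card (\<Union>i\<in>I. S \<inter> F i)"
    using I S disjoint by (subst card_UN_disjoint) auto
  also have "\<dots> \<le> card S" using S by (intro card_mono) auto
  finally show ?thesis .
qed

lemma matching_strong_resolving_graphD:
  assumes "matching (strong_resolving_graph G) M"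
  shows "e \<in> M \<Longrightarrow> \<exists>u v. e = {u, v} \<and> mutually_maximally_distant G u v"
    and "e \<in> M \<Longrightarrow> e' \<in> M \<Longrightarrow> e \<noteq> e' \<Longrightarrow> e \<inter> e' = {}"
    and "M \<subseteq> Pow (verts G)"
  using assms
  unfolding matching_def strong_resolving_graph_def adj_def mutually_maximally_distant_def
  by auto

lemma obtain_maximum_matching_strong_resolving_graph:
  assumes "finite (verts G)"
  obtains M where "matching (strong_resolving_graph G) M" "finite M"
    "card M = matching_number (strong_resolving_graph G)"
proof -
  let ?Ms = "{M. matching (strong_resolving_graph G) M}"
  have Ms_Pow: "?Ms \<subseteq> Pow (Pow (verts G))"
    using matching_strong_resolving_graphD(3) by blast
  have "finite ?Ms" using finite_subset[OF Ms_Pow] assms by simp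
  moreover have "{} \<in> ?Ms" unfolding matching_def by simp
  ultimately have "Max (card ` ?Ms) \<in> card ` ?Ms" by (intro Max_in) auto
  then obtain M where M: "matching (strong_resolving_graph G) M"
    and "card M = matching_number (strong_resolving_graph G)"
    unfolding matching_number_def setcompr_eq_image by auto
  moreover have "finite M"
    using finite_subset[OF matching_strong_resolving_graphD(3)[OF M]] assms by simp
  ultimately show ?thesis using that by blast
qed

lemma matching_number_mult_le_card:
  assumes G: "finite (verts G)" and S: "finite S"
    and disjoint: "\<And>e e'. e \<inter> e' = {} \<Longrightarrow> F e \<inter> F e' = {}"
    and block: "\<And>u v. mutually_maximally_distant G u v \<Longrightarrow> k \<le> card (S \<inter> F {u, v})"
  shows "matching_number (strong_resolving_graph G) * k \<le> card S"
proof -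
  obtain M where M: "matching (strong_resolving_graph G) M" "finite M"
    and card_M: "card M = matching_number (strong_resolving_graph G)"
    using obtain_maximum_matching_strong_resolving_graph[OF G] .
  have "card M * k \<le> card S"
  proof (rule card_mult_le_card_disjoint_blocks[OF M(2) S])
    fix e e' assume "e \<in> M" "e' \<in> M" "e \<noteq> e'"
    then show "F e \<inter> F e' = {}"
      by (intro disjoint matching_strong_resolving_graphD(2)[OF M(1)])
  next
    fix e assume "e \<in> M"
    then obtain u v where "e = {u, v}" "mutually_maximally_distant G u v"
      using matching_strong_resolving_graphD(1)[OF M(1)] by blast
    then show "k \<le> card (S \<inter> F e)" using block by simp
  qed
  then show ?thesis using card_M by simp
qed

lemma matching_number_mult_sdim_K2_le_sdim:
  assumes G: "connected_graph G" and H: "connected_graph H"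
  shows "matching_number (strong_resolving_graph H) * sdim (cart_prod G K2)
           \<le> sdim (cart_prod G H)"
proof -
  obtain S where S: "strong_resolving_set (cart_prod G H) S" "card S = sdim (cart_prod G H)"
    by (rule obtain_strong_resolving_set_sdim)
  have "finite S"
    using S(1) connected_graph_finite[OF connected_graph_cart_prod[OF G H]]
    by (rule strong_resolving_set_finite[rotated])
  have "matching_number (strong_resolving_graph H) * sdim (cart_prod G K2) \<le> card S"
  proof (rule matching_number_mult_le_card[OF connected_graph_finite[OF H] \<open>finite S\<close>,
        where F = "\<lambda>e. verts G \<times> e"])
    show "\<And>e e'. e \<inter> e' = {} \<Longrightarrow> verts G \<times> e \<inter> verts G \<times> e' = {}" by blast
    show "\<And>u v. mutually_maximally_distant H u v
            \<Longrightarrow> sdim (cart_prod G K2) \<le> card (S \<inter> verts G \<times> {u, v})"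
      by (rule sdim_cart_prod_K2_le[OF G H S(1)])
  qed
  with S(2) show ?thesis by simp
qed

lemma two_mult_matching_number_le_sdim_K2:
  assumes G: "connected_graph G"
  shows "2 * matching_number (strong_resolving_graph G) \<le> sdim (cart_prod G K2)"
proof -
  obtain S where S: "strong_resolving_set (cart_prod G K2) S" "card S = sdim (cart_prod G K2)"
    by (rule obtain_strong_resolving_set_sdim)
  have "finite S"
    using S(1) connected_graph_finite[OF connected_graph_cart_prod[OF G connected_graph_K2]]
    by (rule strong_resolving_set_finite[rotated])
  have "matching_number (strong_resolving_graph G) * 2 \<le> card S"
  proof (rule matching_number_mult_le_card[OF connected_graph_finite[OF G] \<open>finite S\<close>,
        where F = "\<lambda>e. e \<times> UNIV"])
    show "\<And>e e'. e \<inter> e' = {} \<Longrightarrow> e \<times> UNIV \<inter> e' \<times> UNIV = {}" by blast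
    show "\<And>u v. mutually_maximally_distant G u v \<Longrightarrow> 2 \<le> card (S \<inter> {u, v} \<times> UNIV)"
      by (rule two_le_card_strong_resolving_set_K2[OF G S(1)])
  qed
  with S(2) show ?thesis by simp
qed

theorem theorem19:
  fixes G :: "'a graph" and H :: "'b graph"
  assumes "connected_graph G" and "connected_graph H"
  shows "matching_number (strong_resolving_graph H) * sdim (cart_prod G K2)
           \<le> sdim (cart_prod G H)
       \<and> 2 * matching_number (strong_resolving_graph G) * matching_number (strong_resolving_graph H)
           \<le> matching_number (strong_resolving_graph H) * sdim (cart_prod G K2)"
  using matching_number_mult_sdim_K2_le_sdim[OF assms]
    mult_le_mono2[OF two_mult_matching_number_le_sdim_K2[OF assms(1)],
      of "matching_number (strong_resolving_graph H)"]
  by (simp add: ac_simps)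

end
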